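(* For any integer $x\in\mathbb{N}\setminus\{1\}$, the filter $\mathcal{F}_{\{1,x\}}$ is the greatest element (with respect to inclusion) of the set $\{\mathcal{F}_{\{1,x^n\}}:n\in\mathbb{N}\}$. If moreover $x\notin\{2m:m\in\mathbb{N}\}\cup\{2^m-1:m\in\mathbb{N}\}$, then $\{n\in\mathbb{N}:\mathcal{F}_{\{1,x^n\}}=\mathcal{F}_{\{1,x\}}\}=\{1\}$.
   Context: $\mathbb{N}=\{1,2,\dots\}$, $\mathbb{N}_0=\{0\}\cup\mathbb{N}$. The Kirch topology $\tau_K$ on $\mathbb{N}$ is generated by the base of all $a+b\mathbb{N}_0=\{a+bn:n\in\mathbb{N}_0\}$ with $a,b\in\mathbb{N}$ coprime and $b$ square-free. Closures $\overline{U}$ are in $\tau_K$; $\tau_y=\{U\in\tau_K:y\in U\}$. For finite $E\subseteq\mathbb{N}$, $\mathcal{F}_E=\{B\subseteq\mathbb{N}:\exists (U_y)_{y\in E}\in\prod_{y\in E}\tau_y\ (\bigcap_{y\in E}\overline{U_y}\subseteq B)\}$. *)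

theory Defs
  imports "HOL-Analysis.Analysis" "HOL-Computational_Algebra.Squarefree"
begin

text \<open>Positive integers are modelled as the subset {1..} of nat.
  The arithmetic progression a + b N_0.\<close>
definition arith_prog :: "nat \<Rightarrow> nat \<Rightarrow> nat set" where
  "arith_prog a b = {a + b * n | n. True}"

definition kirch_base :: "nat set set" where
  "kirch_base = {arith_prog a b | a b. a \<ge> 1 \<and> b \<ge> 1 \<and> coprime a b \<and> squarefree b}"

definition kirch_top :: "nat topology" where
  "kirch_top = topology (\<lambda>U. U \<subseteq> {1..} \<and>
      (\<forall>x\<in>U. \<exists>B\<in>kirch_base. x \<in> B \<and> B \<subseteq> U))"

definition kirch_nbhds :: "nat \<Rightarrow> nat set set" where
  "kirch_nbhds y = {U. openin kirch_top U \<and> y \<in> U}"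

definition kirch_filter :: "nat set \<Rightarrow> nat set set" where
  "kirch_filter E = {B. B \<subseteq> {1..} \<and>
      (\<exists>U. (\<forall>y\<in>E. U y \<in> kirch_nbhds y) \<and>
           (\<Inter>y\<in>E. kirch_top closure_of (U y)) \<subseteq> B)}"

end

theory Submission
  imports Defs "HOL-Number_Theory.Number_Theory"
begin

text \<open>
  Closures in the Kirch topology are arithmetic: y lies in the closure of c + d N_0 iff
  every prime q dividing d divides y or satisfies y = c (mod q).  So F_{1,z} is generated by
  the sets cl(1 + b N_0) \<inter> cl(z + d N_0), and F_{1,x^n} \<subseteq> F_{1,x} because y = 1 and y = x
  modulo q force y = x^n.  Conversely, if a prime p divides x^n - 1 but not x - 1, then
  cl(1 + p N_0) \<inter> cl(x + p N_0) lies in F_{1,x} but not in F_{1,x^n}: a number y = 1 (mod p)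
  divisible by all other primes of b d lies in cl(1 + b N_0) \<inter> cl(x^n + d N_0) but not in
  cl(x + p N_0).  For n \<ge> 2 such a p exists unless x + 1 is a power of 2: pick a prime q dividing
  n; if every prime factor of 1 + x + ... + x^(q-1) divided x - 1, this sum would be a power of q,
  which is impossible for odd q (the sum is q modulo q^2) and means x = 2^m - 1 for q = 2.
\<close>

section \<open>Arithmetic progressions\<close>

lemma mem_arith_prog_iff: "z \<in> arith_prog a b \<longleftrightarrow> (\<exists>n. z = a + b * n)"
  by (auto simp: arith_prog_def)

lemma start_mem_arith_prog [simp]: "a \<in> arith_prog a b"
  by (auto simp: mem_arith_prog_iff intro: exI[of _ 0])

lemma arith_prog_subset:
  assumes "z \<in> arith_prog a b" "b dvd d"
  shows "arith_prog z d \<subseteq> arith_prog a b"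
proof
  fix w assume "w \<in> arith_prog z d"
  then obtain n where "w = z + d * n" by (auto simp: mem_arith_prog_iff)
  moreover obtain m where "z = a + b * m" using assms(1) by (auto simp: mem_arith_prog_iff)
  moreover obtain k where "d = b * k" using assms(2) by blast
  ultimately have "w = a + b * (m + k * n)" by (simp add: algebra_simps)
  thus "w \<in> arith_prog a b" by (auto simp: mem_arith_prog_iff)
qed

lemma coprime_arith_prog:
  assumes "z \<in> arith_prog a b" "coprime a b"
  shows "coprime z b"
proof -
  obtain n where "z = a + b * n" using assms(1) by (auto simp: mem_arith_prog_iff)
  hence "z = n * b + a" by simp
  moreover have "gcd b a = 1" using assms(2) by (metis coprime_iff_gcd_eq_1 gcd.commute)
  ultimately show ?thesis using gcd_add_mult[of b n a] by (metis coprime_iff_gcd_eq_1 gcd.commute)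
qed

lemma arith_progs_meet:
  fixes y c d e :: nat
  assumes "d \<ge> 1" "e \<ge> 1" "[y = c] (mod gcd e d)"
  shows "\<exists>i j. y + e * i = c + d * j"
proof -
  \<comment> \<open>c is replaced by c + d y, which is at least y, to avoid truncated subtraction;
    the solution i is then raised by d c so that y + e i is at least c\<close>
  have y_le: "y \<le> c + d * y"
    using assms(1) by (simp add: trans_le_add2)
  have "[c + d * y = c] (mod gcd e d)"
    using cong_dvd_modulus_nat[of "c + d * y" c d "gcd e d"] by (simp add: cong_def)
  hence "[c + d * y = y] (mod gcd e d)"
    using assms(3) by (metis cong_sym cong_trans)
  hence "gcd e d dvd (c + d * y) - y"
    using y_le by (simp add: cong_altdef_nat)
  then obtain i where i: "[e * i = (c + d * y) - y] (mod d)"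
    using cong_solve_dvd_nat by blast
  have "[y + e * i = y + ((c + d * y) - y)] (mod d)"
    using i by (rule cong_add_lcancel_nat[THEN iffD2])
  hence "[y + e * i = c] (mod d)"
    using y_le by (simp add: cong_def)
  moreover have "y + e * (i + d * c) = (y + e * i) + (e * c) * d"
    by (simp add: algebra_simps)
  ultimately have "[y + e * (i + d * c) = c] (mod d)"
    by (simp only: cong_def mod_mult_self1)
  moreover have "c \<le> y + e * (i + d * c)"
  proof -
    have "c \<le> (e * d) * c" using assms(1,2) by simp
    thus ?thesis by (simp add: algebra_simps trans_le_add2)
  qed
  ultimately obtain j where "y + e * (i + d * c) = j * d + c"
    using cong_le_nat by blast
  hence "y + e * (i + d * c) = c + d * j"
    by simp
  thus ?thesis by blast
qed

lemma squarefree_lcm_nat: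
  fixes a b :: nat
  assumes "squarefree a" "squarefree b"
  shows "squarefree (lcm a b)"
proof -
  have "0 < a" "0 < b" using assms not_squarefree_0 by (metis gr0I)+
  hence "lcm a b \<noteq> 0" by (simp add: lcm_eq_0_iff)
  thus ?thesis
    using assms \<open>0 < a\<close> \<open>0 < b\<close>
    by (simp add: squarefree_factorial_semiring'' multiplicity_lcm)
qed

lemma squarefree_dvd_if_prime_divisors_dvd:
  fixes g m :: nat
  assumes "squarefree g" "\<And>p. prime p \<Longrightarrow> p dvd g \<Longrightarrow> p dvd m"
  shows "g dvd m"
proof (cases "m = 0")
  case False
  have "g \<noteq> 0" using assms(1) not_squarefree_0 by metis
  thus ?thesis
  proof (rule multiplicity_le_imp_dvd)
    fix p :: nat assume p: "prime p"
    show "multiplicity p g \<le> multiplicity p m"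
    proof (cases "p dvd g")
      case True
      hence "0 < multiplicity p m"
        using assms(2) p False by (simp add: prime_multiplicity_gt_zero_iff)
      moreover have "multiplicity p g \<le> 1"
        using assms(1) p \<open>g \<noteq> 0\<close> by (simp add: squarefree_factorial_semiring'')
      ultimately show ?thesis by linarith
    qed (simp add: not_dvd_imp_multiplicity_0)
  qed
qed simp

lemma exists_cong_one_dvd_by_other_prime_divisors:
  fixes p r :: nat
  assumes "prime p" "r \<noteq> 0"
  obtains y where "y \<ge> 1" "[y = 1] (mod p)" "\<And>q. prime q \<Longrightarrow> q dvd r \<Longrightarrow> q \<noteq> p \<Longrightarrow> q dvd y"
proof -
  obtain s where s: "r = p ^ multiplicity p r * s" "\<not> p dvd s"
    using multiplicity_decompose'[of r p] assms not_prime_unit by metis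
  have "s \<noteq> 0" using s(1) assms(2) mult_0_right by metis
  have "[s ^ (p - 1) = 1] (mod p)"
    using fermat_theorem[OF assms(1) s(2)] .
  moreover have "q dvd s ^ (p - 1)" if q: "prime q" "q dvd r" "q \<noteq> p" for q
  proof -
    have "\<not> q dvd p ^ multiplicity p r"
      using q(1,3) assms(1) prime_dvd_power primes_dvd_imp_eq by blast
    hence "q dvd s" using q(1,2) s(1) prime_dvd_mult_iff by metis
    moreover have "p - 1 \<noteq> 0" using prime_gt_1_nat[OF assms(1)] by simp
    ultimately show ?thesis by (metis dvd_power dvd_trans not_gr0)
  qed
  ultimately show thesis
    using that[of "s ^ (p - 1)"] \<open>s \<noteq> 0\<close> by simp
qed

section \<open>The Kirch topology\<close>

lemma kirch_base_refine:
  assumes "B \<in> kirch_base" "x \<in> B"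
  obtains b where "b \<ge> 1" "coprime x b" "squarefree b" "arith_prog x b \<subseteq> B" "x \<ge> 1"
proof -
  obtain a b where B: "B = arith_prog a b" "a \<ge> 1" "b \<ge> 1" "coprime a b" "squarefree b"
    using assms(1) unfolding kirch_base_def by blast
  have x: "x \<in> arith_prog a b" using assms(2) B(1) by simp
  hence "x \<ge> 1" using B(2) by (auto simp: mem_arith_prog_iff)
  thus thesis
    using that B coprime_arith_prog[OF x] arith_prog_subset[OF x] by auto
qed

lemma kirch_base_Int:
  assumes "B1 \<in> kirch_base" "B2 \<in> kirch_base" "x \<in> B1 \<inter> B2"
  shows "\<exists>B\<in>kirch_base. x \<in> B \<and> B \<subseteq> B1 \<inter> B2"
proof -
  obtain b1 where b1: "b1 \<ge> 1" "coprime x b1" "squarefree b1" "arith_prog x b1 \<subseteq> B1" "x \<ge> 1"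
    using kirch_base_refine[OF assms(1)] assms(3) by blast
  obtain b2 where b2: "b2 \<ge> 1" "coprime x b2" "squarefree b2" "arith_prog x b2 \<subseteq> B2"
    using kirch_base_refine[OF assms(2)] assms(3) by blast
  define d where "d = lcm b1 b2"
  have "coprime x d"
    using b1(2) b2(2) coprime_divisors[of x x d "b1 * b2"] by (simp add: d_def lcm_least)
  moreover have "squarefree d"
    using b1(3) b2(3) by (simp add: d_def squarefree_lcm_nat)
  moreover have "d \<ge> 1"
    using b1(1) b2(1) by (simp add: d_def Suc_le_eq lcm_pos_nat)
  ultimately have base: "arith_prog x d \<in> kirch_base"
    using b1(5) unfolding kirch_base_def by blast
  have "arith_prog x d \<subseteq> arith_prog x b1"
    by (rule arith_prog_subset) (simp_all add: d_def)
  moreover have "arith_prog x d \<subseteq> arith_prog x b2"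
    by (rule arith_prog_subset) (simp_all add: d_def)
  ultimately have "arith_prog x d \<subseteq> B1 \<inter> B2"
    using b1(4) b2(4) by auto
  with base show ?thesis
    by (intro bexI[of _ "arith_prog x d"]) simp_all
qed

lemma istopology_kirch:
  "istopology (\<lambda>U. U \<subseteq> {1..} \<and> (\<forall>x\<in>U. \<exists>B\<in>kirch_base. x \<in> B \<and> B \<subseteq> U))"
  unfolding istopology_def
proof (intro conjI allI impI ballI)
  fix S T :: "nat set"
  assume S: "S \<subseteq> {1..} \<and> (\<forall>x\<in>S. \<exists>B\<in>kirch_base. x \<in> B \<and> B \<subseteq> S)"
    and T: "T \<subseteq> {1..} \<and> (\<forall>x\<in>T. \<exists>B\<in>kirch_base. x \<in> B \<and> B \<subseteq> T)"
  show "S \<inter> T \<subseteq> {1..}" using S by blast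
  fix x assume "x \<in> S \<inter> T"
  then obtain B1 B2 where B12: "B1 \<in> kirch_base" "B2 \<in> kirch_base" "x \<in> B1 \<inter> B2"
    and "B1 \<subseteq> S" "B2 \<subseteq> T"
    using S T by (meson IntD1 IntD2 IntI)
  moreover obtain B where "B \<in> kirch_base" "x \<in> B" "B \<subseteq> B1 \<inter> B2"
    using kirch_base_Int[OF B12] by blast
  ultimately show "\<exists>B\<in>kirch_base. x \<in> B \<and> B \<subseteq> S \<inter> T"
    by blast
next
  fix K :: "nat set set"
  assume "\<forall>U\<in>K. U \<subseteq> {1..} \<and> (\<forall>x\<in>U. \<exists>B\<in>kirch_base. x \<in> B \<and> B \<subseteq> U)"
  thus "\<Union>K \<subseteq> {1..}" by (intro Union_least) simp
next
  fix K :: "nat set set" and x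
  assume "\<forall>U\<in>K. U \<subseteq> {1..} \<and> (\<forall>x\<in>U. \<exists>B\<in>kirch_base. x \<in> B \<and> B \<subseteq> U)"
    and "x \<in> \<Union>K"
  thus "\<exists>B\<in>kirch_base. x \<in> B \<and> B \<subseteq> \<Union>K"
    by (meson UnionE Union_upper order_trans)
qed

lemma openin_kirch_top:
  "openin kirch_top U \<longleftrightarrow> U \<subseteq> {1..} \<and> (\<forall>x\<in>U. \<exists>B\<in>kirch_base. x \<in> B \<and> B \<subseteq> U)"
  unfolding kirch_top_def using istopology_kirch by simp

lemma openin_kirch_top_arith_prog:
  assumes "a \<ge> 1" "b \<ge> 1" "coprime a b" "squarefree b"
  shows "openin kirch_top (arith_prog a b)"
proof -
  have "arith_prog a b \<in> kirch_base" using assms unfolding kirch_base_def by blast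
  moreover have "arith_prog a b \<subseteq> {1..}" using assms(1) by (auto simp: mem_arith_prog_iff)
  ultimately show ?thesis unfolding openin_kirch_top by blast
qed

lemma openin_kirch_top_refine:
  assumes "openin kirch_top W" "w \<in> W"
  obtains d where "d \<ge> 1" "coprime w d" "squarefree d" "arith_prog w d \<subseteq> W"
proof -
  obtain B where "B \<in> kirch_base" "w \<in> B" "B \<subseteq> W"
    using assms unfolding openin_kirch_top by blast
  thus thesis using that kirch_base_refine by (metis subset_trans)
qed

lemma topspace_kirch_top: "topspace kirch_top = {1..}"
proof
  show "topspace kirch_top \<subseteq> {1..}"
    using openin_kirch_top openin_topspace by blast
  show "{1..} \<subseteq> topspace kirch_top"
  proof
    fix y :: nat assume "y \<in> {1..}"
    hence "openin kirch_top (arith_prog y 1)"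
      by (intro openin_kirch_top_arith_prog) auto
    thus "y \<in> topspace kirch_top"
      by (meson openin_subset start_mem_arith_prog subsetD)
  qed
qed

lemma closure_of_kirch_top_subset: "kirch_top closure_of S \<subseteq> {1..}"
  using closure_of_subset_topspace topspace_kirch_top by metis

lemma in_closure_of_arith_prog_iff:
  fixes c d y :: nat
  assumes "c \<ge> 1" "d \<ge> 1" "coprime c d" "y \<ge> 1"
  shows "y \<in> kirch_top closure_of arith_prog c d \<longleftrightarrow>
         (\<forall>q. prime q \<longrightarrow> q dvd d \<longrightarrow> q dvd y \<or> [y = c] (mod q))"
proof
  assume y: "y \<in> kirch_top closure_of arith_prog c d"
  show "\<forall>q. prime q \<longrightarrow> q dvd d \<longrightarrow> q dvd y \<or> [y = c] (mod q)"
  proof (intro allI impI)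
    fix q :: nat assume q: "prime q" "q dvd d"
    show "q dvd y \<or> [y = c] (mod q)"
    proof (cases "q dvd y")
      case False
      have "coprime y q"
        using prime_imp_coprime[OF q(1) False] by (simp add: coprime_commute)
      hence "openin kirch_top (arith_prog y q)"
        using openin_kirch_top_arith_prog assms(4) q(1) prime_ge_1_nat squarefree_prime by blast
      then obtain z where "z \<in> arith_prog c d" "z \<in> arith_prog y q"
        using y start_mem_arith_prog[of y q] unfolding in_closure_of by blast
      then obtain i j where "y + q * i = c + d * j"
        by (metis mem_arith_prog_iff)
      moreover obtain k where "d = q * k" using q(2) by blast
      ultimately have "(y + q * i) mod q = (c + q * (k * j)) mod q"
        by (simp add: mult.assoc)
      thus ?thesis
        by (simp add: cong_def)
    qed simp
  qed
next
  assume H: "\<forall>q. prime q \<longrightarrow> q dvd d \<longrightarrow> q dvd y \<or> [y = c] (mod q)"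
  have "y \<in> topspace kirch_top" using topspace_kirch_top assms(4) by simp
  moreover have "\<exists>z. z \<in> arith_prog c d \<and> z \<in> T" if T: "openin kirch_top T" "y \<in> T" for T
  proof -
    obtain e where e: "e \<ge> 1" "coprime y e" "squarefree e" "arith_prog y e \<subseteq> T"
      using openin_kirch_top_refine[OF T] by blast
    have "gcd e d dvd nat \<bar>int y - int c\<bar>"
    proof (rule squarefree_dvd_if_prime_divisors_dvd)
      show "squarefree (gcd e d)" using e(3) squarefree_mono gcd_dvd1 by blast
      fix p :: nat assume p: "prime p" "p dvd gcd e d"
      hence "\<not> p dvd y"
        using e(2) by (metis coprime_common_divisor_nat gcd_dvd1 dvd_trans not_prime_1)
      hence "[y = c] (mod p)" using H p by auto
      thus "p dvd nat \<bar>int y - int c\<bar>" by (simp add: cong_altdef_nat')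
    qed
    hence "[y = c] (mod gcd e d)" by (simp add: cong_altdef_nat')
    then obtain i j where "y + e * i = c + d * j"
      using arith_progs_meet assms(2) e(1) by blast
    hence "y + e * i \<in> arith_prog c d" "y + e * i \<in> arith_prog y e"
      unfolding mem_arith_prog_iff by metis+
    thus ?thesis using e(4) by blast
  qed
  ultimately show "y \<in> kirch_top closure_of arith_prog c d"
    unfolding in_closure_of by blast
qed

section \<open>The filters F_{1,z}\<close>

lemma kirch_filter_pair_iff:
  fixes z :: nat
  assumes "z \<ge> 2"
  shows "B \<in> kirch_filter {1, z} \<longleftrightarrow> B \<subseteq> {1..} \<and>
    (\<exists>b d. b \<ge> 1 \<and> squarefree b \<and> d \<ge> 1 \<and> coprime z d \<and> squarefree d \<and>
       kirch_top closure_of arith_prog 1 b \<inter> kirch_top closure_of arith_prog z d \<subseteq> B)"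
proof
  assume "B \<in> kirch_filter {1, z}"
  then obtain U where B: "B \<subseteq> {1..}" "\<forall>y\<in>{1, z}. U y \<in> kirch_nbhds y"
    "(\<Inter>y\<in>{1, z}. kirch_top closure_of (U y)) \<subseteq> B"
    unfolding kirch_filter_def by blast
  hence "openin kirch_top (U 1)" "1 \<in> U 1" "openin kirch_top (U z)" "z \<in> U z"
    unfolding kirch_nbhds_def by auto
  then obtain b d where b: "b \<ge> 1" "squarefree b" "arith_prog 1 b \<subseteq> U 1"
    and d: "d \<ge> 1" "coprime z d" "squarefree d" "arith_prog z d \<subseteq> U z"
    using openin_kirch_top_refine by metis
  have "kirch_top closure_of arith_prog 1 b \<inter> kirch_top closure_of arith_prog z d \<subseteq> B"
    using B(3) closure_of_mono[OF b(3), of kirch_top] closure_of_mono[OF d(4), of kirch_top] by auto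
  thus "B \<subseteq> {1..} \<and> (\<exists>b d. b \<ge> 1 \<and> squarefree b \<and> d \<ge> 1 \<and> coprime z d \<and> squarefree d \<and>
       kirch_top closure_of arith_prog 1 b \<inter> kirch_top closure_of arith_prog z d \<subseteq> B)"
    using B(1) b(1,2) d(1-3) by blast
next
  assume "B \<subseteq> {1..} \<and> (\<exists>b d. b \<ge> 1 \<and> squarefree b \<and> d \<ge> 1 \<and> coprime z d \<and> squarefree d \<and>
       kirch_top closure_of arith_prog 1 b \<inter> kirch_top closure_of arith_prog z d \<subseteq> B)"
  then obtain b d where B: "B \<subseteq> {1..}" and b: "b \<ge> 1" "squarefree b"
    and d: "d \<ge> 1" "coprime z d" "squarefree d"
    and sub: "kirch_top closure_of arith_prog 1 b \<inter> kirch_top closure_of arith_prog z d \<subseteq> B"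
    by blast
  define U where "U t = (if t = 1 then arith_prog 1 b else arith_prog z d)" for t :: nat
  have "\<forall>y\<in>{1, z}. U y \<in> kirch_nbhds y"
    using assms b d by (auto simp: U_def kirch_nbhds_def intro!: openin_kirch_top_arith_prog)
  moreover have "(\<Inter>y\<in>{1, z}. kirch_top closure_of (U y)) \<subseteq> B"
    using assms sub by (simp add: U_def)
  ultimately show "B \<in> kirch_filter {1, z}"
    unfolding kirch_filter_def using B by blast
qed

lemma closure_of_arith_prog_Int_subset_power:
  fixes x d n :: nat
  assumes "x \<ge> 1" "d \<ge> 1" "coprime x d"
  shows "kirch_top closure_of arith_prog 1 d \<inter> kirch_top closure_of arith_prog x d
         \<subseteq> kirch_top closure_of arith_prog (x ^ n) d"
proof
  fix y assume y: "y \<in> kirch_top closure_of arith_prog 1 d \<inter> kirch_top closure_of arith_prog x d"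
  have "y \<ge> 1"
    using y closure_of_kirch_top_subset by (meson IntD1 atLeast_iff subsetD)
  have one: "q dvd y \<or> [y = 1] (mod q)" and base: "q dvd y \<or> [y = x] (mod q)"
    if "prime q" "q dvd d" for q
    using y that in_closure_of_arith_prog_iff[OF _ assms(2) _ \<open>y \<ge> 1\<close>] assms(1,3) by auto
  have "q dvd y \<or> [y = x ^ n] (mod q)" if q: "prime q" "q dvd d" for q
  proof (cases "q dvd y")
    case False
    hence "[y = 1] (mod q)" "[y = x] (mod q)" using one[OF q] base[OF q] by auto
    hence "[x ^ n = 1 ^ n] (mod q)" by (metis cong_pow cong_sym cong_trans)
    thus ?thesis using \<open>[y = 1] (mod q)\<close> by (metis cong_sym cong_trans power_one)
  qed simp
  thus "y \<in> kirch_top closure_of arith_prog (x ^ n) d"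
    using in_closure_of_arith_prog_iff[OF _ assms(2) _ \<open>y \<ge> 1\<close>] assms by simp
qed

lemma kirch_filter_power_subset:
  fixes x n :: nat
  assumes "x \<ge> 2" "n \<ge> 1"
  shows "kirch_filter {1, x ^ n} \<subseteq> kirch_filter {1, x}"
proof
  fix B assume B_mem: "B \<in> kirch_filter {1, x ^ n}"
  have "x ^ n \<ge> 2"
    using power_increasing[OF assms(2), of x] assms(1) by simp
  from kirch_filter_pair_iff[OF this, THEN iffD1, OF B_mem]
  obtain b d where B: "B \<subseteq> {1..}" and b: "b \<ge> 1" "squarefree b"
    and d: "d \<ge> 1" "coprime (x ^ n) d" "squarefree d"
    and sub: "kirch_top closure_of arith_prog 1 b \<inter> kirch_top closure_of arith_prog (x ^ n) d \<subseteq> B"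
    by metis
  have x_d: "coprime x d" using d(2) assms(2) by simp
  define b' where "b' = lcm b d"
  have "arith_prog 1 b' \<subseteq> arith_prog 1 b"
    by (rule arith_prog_subset) (simp_all add: b'_def)
  moreover have "arith_prog 1 b' \<subseteq> arith_prog 1 d"
    by (rule arith_prog_subset) (simp_all add: b'_def)
  ultimately have "kirch_top closure_of arith_prog 1 b' \<subseteq>
         kirch_top closure_of arith_prog 1 b \<inter> kirch_top closure_of arith_prog 1 d"
    by (simp add: closure_of_mono)
  hence "kirch_top closure_of arith_prog 1 b' \<inter> kirch_top closure_of arith_prog x d \<subseteq> B"
    using closure_of_arith_prog_Int_subset_power[of x d n] assms(1) d(1) x_d sub by auto
  moreover have "b' \<ge> 1" "squarefree b'"
    using b d by (simp_all add: b'_def Suc_le_eq lcm_pos_nat squarefree_lcm_nat)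
  ultimately show "B \<in> kirch_filter {1, x}"
    using kirch_filter_pair_iff[OF assms(1)] B d(1,3) x_d by blast
qed

lemma exists_cong_one_in_closures_of_arith_progs:
  fixes p b c d :: nat
  assumes "prime p" "b \<ge> 1" "c \<ge> 1" "d \<ge> 1" "coprime c d" "[c = 1] (mod p)"
  obtains y where "y \<ge> 1" "[y = 1] (mod p)"
    "y \<in> kirch_top closure_of arith_prog 1 b \<inter> kirch_top closure_of arith_prog c d"
proof -
  obtain y where y: "y \<ge> 1" "[y = 1] (mod p)"
    and other: "\<And>q. prime q \<Longrightarrow> q dvd b * d \<Longrightarrow> q \<noteq> p \<Longrightarrow> q dvd y"
    using exists_cong_one_dvd_by_other_prime_divisors[OF assms(1), of "b * d"] assms(2,4) by auto
  have "q dvd y \<or> [y = 1] (mod q)" if "prime q" "q dvd b" for q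
    using other[of q] that y(2) by (cases "q = p") auto
  hence "y \<in> kirch_top closure_of arith_prog 1 b"
    using in_closure_of_arith_prog_iff[of 1 b y] assms(2) y(1) by simp
  moreover have "[y = c] (mod p)"
    using y(2) assms(6) by (metis cong_sym cong_trans)
  hence "q dvd y \<or> [y = c] (mod q)" if "prime q" "q dvd d" for q
    using other[of q] that by (cases "q = p") auto
  hence "y \<in> kirch_top closure_of arith_prog c d"
    using in_closure_of_arith_prog_iff[of c d y] assms(3-5) y(1) by simp
  ultimately show thesis using that y(1,2) by blast
qed

lemma kirch_filter_power_eq_imp_cong_one:
  fixes x n p :: nat
  assumes "x \<ge> 2" "n \<ge> 1" "kirch_filter {1, x ^ n} = kirch_filter {1, x}"
    and "prime p" "[x ^ n = 1] (mod p)"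
  shows "[x = 1] (mod p)"
proof -
  have p: "p \<ge> 1" "squarefree p"
    using assms(4) prime_ge_1_nat squarefree_prime by auto
  have "x ^ n \<ge> 2"
    using power_increasing[OF assms(2), of x] assms(1) by simp
  have "coprime (x ^ n) p"
    using cong_imp_coprime[OF cong_sym[OF assms(5)]] by simp
  hence x_p: "coprime x p" using assms(2) by simp
  define B0 where
    "B0 = kirch_top closure_of arith_prog 1 p \<inter> kirch_top closure_of arith_prog x p"
  have "B0 \<subseteq> {1..}"
    unfolding B0_def using closure_of_kirch_top_subset by (meson le_infI1)
  hence "B0 \<in> kirch_filter {1, x}"
    using kirch_filter_pair_iff[OF assms(1)] p x_p unfolding B0_def by blast
  hence "B0 \<in> kirch_filter {1, x ^ n}" using assms(3) by simp
  from kirch_filter_pair_iff[OF \<open>x ^ n \<ge> 2\<close>, THEN iffD1, OF this]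
  obtain b d where "b \<ge> 1" "d \<ge> 1" "coprime (x ^ n) d"
    and sub: "kirch_top closure_of arith_prog 1 b \<inter> kirch_top closure_of arith_prog (x ^ n) d \<subseteq> B0"
    by metis
  then obtain y where y: "y \<ge> 1" "[y = 1] (mod p)"
    "y \<in> kirch_top closure_of arith_prog 1 b \<inter> kirch_top closure_of arith_prog (x ^ n) d"
    using exists_cong_one_in_closures_of_arith_progs[OF assms(4) _ _ _ _ assms(5)] \<open>x ^ n \<ge> 2\<close>
    by (metis Suc_1 Suc_leD)
  hence "y \<in> kirch_top closure_of arith_prog x p"
    using sub unfolding B0_def by blast
  hence "p dvd y \<or> [y = x] (mod p)"
    using in_closure_of_arith_prog_iff[OF _ p(1) x_p y(1)] assms(1,4) by auto
  moreover have "\<not> p dvd y"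
    using y(2) assms(4) by (metis cong_dvd_iff cong_sym not_prime_1 nat_dvd_1_iff_1)
  ultimately show ?thesis
    using y(2) by (metis cong_sym cong_trans)
qed

section \<open>Prime divisors of x^n - 1 that do not divide x - 1\<close>

lemma power_of_prime_if_prime_divisors_eq:
  fixes q n :: nat
  assumes "prime q" "n \<noteq> 0" "\<And>p. prime p \<Longrightarrow> p dvd n \<Longrightarrow> p = q"
  shows "n = q ^ multiplicity q n"
proof -
  have "(\<Prod>p\<in>prime_factors n. p ^ multiplicity p n) = (\<Prod>p\<in>{q}. p ^ multiplicity p n)"
    using assms by (intro prod.mono_neutral_left) (auto simp: not_dvd_imp_multiplicity_0 in_prime_factors_iff)
  thus ?thesis using prod_prime_factors[OF assms(2)] by simp
qed

lemma diff_one_mult_geometric_sum_nat: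
  fixes x q :: nat
  assumes "x \<ge> 1"
  shows "(x - 1) * (\<Sum>i<q. x ^ i) = x ^ q - 1"
proof -
  have "int ((x - 1) * (\<Sum>i<q. x ^ i)) = (int x - 1) * (\<Sum>i<q. int x ^ i)"
    using assms by (simp add: of_nat_diff)
  also have "\<dots> = int (x ^ q - 1)"
    using power_diff_1_eq[of "int x" q] assms by (simp add: of_nat_diff)
  finally show ?thesis by (simp only: of_nat_eq_iff)
qed

lemma geometric_sum_cong_if_cong_one:
  fixes x q p :: nat
  assumes "[x = 1] (mod p)"
  shows "[(\<Sum>i<q. x ^ i) = q] (mod p)"
proof -
  have "[(\<Sum>i<q. x ^ i) = (\<Sum>i<q. 1 ^ i)] (mod p)"
    using assms by (intro cong_sum cong_pow)
  thus ?thesis by simp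
qed

lemma power_one_plus_cong:
  fixes t i :: nat
  shows "[(1 + t) ^ i = 1 + i * t] (mod t ^ 2)"
proof (induction i)
  case 0
  show ?case by simp
next
  case (Suc i)
  have "[(1 + t) * (1 + t) ^ i = (1 + t) * (1 + i * t)] (mod t ^ 2)"
    by (rule cong_mult[OF cong_refl Suc.IH])
  hence "[(1 + t) ^ Suc i = (1 + t) * (1 + i * t)] (mod t ^ 2)"
    by (simp only: power_Suc)
  moreover have "(1 + t) * (1 + i * t) = (1 + Suc i * t) + i * t ^ 2"
    by (simp add: algebra_simps power2_eq_square)
  moreover have "[(1 + Suc i * t) + i * t ^ 2 = 1 + Suc i * t] (mod t ^ 2)"
    by (simp add: cong_def)
  ultimately show ?case
    by (metis cong_trans)
qed

lemma odd_prime_dvd_sum_lessThan: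
  fixes q :: nat
  assumes "prime q" "odd q"
  shows "q dvd (\<Sum>i<q. i)"
proof -
  obtain m where m: "q = Suc m" using assms(1) by (cases q) auto
  have "2 * (\<Sum>i<q. i) = m * q"
    using double_gauss_sum[of m, where ?'a = nat] by (simp add: m atLeast0AtMost lessThan_Suc_atMost)
  hence "q dvd 2 * (\<Sum>i<q. i)" by simp
  thus ?thesis using assms by (metis prime_dvd_mult_iff primes_dvd_imp_eq two_is_prime_nat)
qed

lemma odd_prime_square_not_dvd_geometric_sum:
  fixes x q :: nat
  assumes "prime q" "odd q" "[x = 1] (mod q)"
  shows "\<not> q ^ 2 dvd (\<Sum>i<q. x ^ i)"
proof
  assume sq_dvd: "q ^ 2 dvd (\<Sum>i<q. x ^ i)"
  have "x \<ge> 1"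
    using assms(1,3) cong_0_1_nat not_prime_1 by (metis less_one not_less)
  define t where "t = x - 1"
  have x_eq: "x = 1 + t" and q_dvd_t: "q dvd t"
    using \<open>x \<ge> 1\<close> assms(3) by (auto simp: t_def cong_altdef_nat cong_sym_eq)
  have "[(\<Sum>i<q. x ^ i) = (\<Sum>i<q. 1 + i * t)] (mod t ^ 2)"
    unfolding x_eq by (intro cong_sum power_one_plus_cong)
  also have "(\<Sum>i<q. 1 + i * t) = q + (\<Sum>i<q. i) * t"
    by (subst sum.distrib) (simp add: sum_distrib_right)
  finally have "[(\<Sum>i<q. x ^ i) = q + (\<Sum>i<q. i) * t] (mod q ^ 2)"
    using q_dvd_t by (metis cong_dvd_modulus_nat dvd_power_same)
  moreover have "q ^ 2 dvd (\<Sum>i<q. i) * t"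
    using odd_prime_dvd_sum_lessThan[OF assms(1,2)] q_dvd_t by (simp add: power2_eq_square mult_dvd_mono)
  ultimately have "[(\<Sum>i<q. x ^ i) = q] (mod q ^ 2)"
    by (metis cong_add_lcancel_0_nat cong_0_iff cong_trans)
  with sq_dvd have "q ^ 2 dvd q"
    by (metis cong_dvd_iff)
  thus False using assms(1)
    by (metis power2_eq_square prime_gt_1_nat dvd_mult_cancel2 less_not_refl prime_gt_0_nat)
qed

lemma exists_prime_dvd_geometric_sum_not_cong_one:
  fixes x q :: nat
  assumes "x \<ge> 2" "prime q" "\<forall>m\<ge>1. x \<noteq> 2 ^ m - 1"
  shows "\<exists>p. prime p \<and> p dvd (\<Sum>i<q. x ^ i) \<and> \<not> [x = 1] (mod p)"
proof (rule ccontr)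
  define S where "S = (\<Sum>i<q. x ^ i)"
  assume "\<not> ?thesis"
  hence cong_one: "[x = 1] (mod p)" if "prime p" "p dvd S" for p
    using that unfolding S_def by blast
  have q_less_S: "q < S"
  proof -
    have "(\<Sum>i<q. 1) < S"
      unfolding S_def using assms(1) prime_gt_1_nat[OF assms(2)]
      by (intro sum_strict_mono_ex1) (auto intro!: bexI[of _ 1])
    thus ?thesis by simp
  qed
  have "p = q" if p: "prime p" "p dvd S" for p
  proof -
    have "[S = q] (mod p)"
      unfolding S_def using cong_one[OF p] by (rule geometric_sum_cong_if_cong_one)
    hence "p dvd q" using p(2) by (metis cong_dvd_iff)
    thus ?thesis using p(1) assms(2) primes_dvd_imp_eq by blast
  qed
  hence S_eq: "S = q ^ multiplicity q S"
    using assms(2) q_less_S by (intro power_of_prime_if_prime_divisors_eq) auto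
  have two_le: "2 \<le> multiplicity q S"
  proof (rule ccontr)
    assume "\<not> ?thesis"
    hence "q ^ multiplicity q S \<le> q ^ 1"
      using prime_gt_0_nat[OF assms(2)] by (intro power_increasing) auto
    thus False using S_eq q_less_S by simp
  qed
  show False
  proof (cases "q = 2")
    case True
    hence "x = 2 ^ multiplicity q S - 1"
      using S_eq by (simp add: S_def numeral_2_eq_2)
    moreover have "x \<noteq> 2 ^ multiplicity q S - 1"
      using assms(3) two_le by simp
    ultimately show False by contradiction
  next
    case False
    hence "odd q" using assms(2) prime_odd_nat prime_ge_2_nat by (metis le_neq_implies_less)
    moreover have sq_dvd: "q ^ 2 dvd S"
      using S_eq two_le by (metis le_imp_power_dvd)
    moreover have "[x = 1] (mod q)"
      using cong_one[OF assms(2)] dvd_trans[OF dvd_power[of 2 q] sq_dvd] by simp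
    ultimately show False
      using odd_prime_square_not_dvd_geometric_sum[OF assms(2)] unfolding S_def by blast
  qed
qed

lemma exists_prime_cong_power_one_not_one:
  fixes x n :: nat
  assumes "x \<ge> 2" "n \<ge> 2" "\<forall>m\<ge>1. x \<noteq> 2 ^ m - 1"
  shows "\<exists>p. prime p \<and> [x ^ n = 1] (mod p) \<and> \<not> [x = 1] (mod p)"
proof -
  obtain q where q: "prime q" "q dvd n"
    using prime_factor_nat[of n] assms(2) by auto
  then obtain p where p: "prime p" "p dvd (\<Sum>i<q. x ^ i)" "\<not> [x = 1] (mod p)"
    using exists_prime_dvd_geometric_sum_not_cong_one[OF assms(1) _ assms(3)] by blast
  have "p dvd x ^ q - 1"
    using p(2) diff_one_mult_geometric_sum_nat[of x q] assms(1)
    by (metis dvd_mult Suc_1 Suc_leD)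
  hence "[x ^ q = 1] (mod p)"
    using assms(1) by (simp add: cong_altdef_nat)
  hence "[(x ^ q) ^ (n div q) = 1] (mod p)"
    by (metis cong_pow power_one)
  hence "[x ^ n = 1] (mod p)"
    using q(2) by (simp add: power_mult[symmetric])
  thus ?thesis using p(1,3) by blast
qed

theorem lemma3p20:
  fixes x :: nat
  assumes "x \<ge> 2"
  shows "(kirch_filter {1, x} \<in> {kirch_filter {1, x ^ n} | n. n \<ge> 1}
          \<and> (\<forall>n\<ge>1. kirch_filter {1, x ^ n} \<subseteq> kirch_filter {1, x}))
       \<and> ((\<forall>m\<ge>1. x \<noteq> 2 * m \<and> x \<noteq> 2 ^ m - 1) \<longrightarrow>
           {n. n \<ge> 1 \<and> kirch_filter {1, x ^ n} = kirch_filter {1, x}} = {1})"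
proof (intro conjI impI allI)
  show "kirch_filter {1, x} \<in> {kirch_filter {1, x ^ n} | n. n \<ge> 1}"
    by (metis (mono_tags, lifting) mem_Collect_eq order_refl power_one_right)
  show "kirch_filter {1, x ^ n} \<subseteq> kirch_filter {1, x}" if "n \<ge> 1" for n
    using kirch_filter_power_subset[OF assms that] .
next
  assume "\<forall>m\<ge>1. x \<noteq> 2 * m \<and> x \<noteq> 2 ^ m - 1"
  hence not_mersenne: "\<forall>m\<ge>1. x \<noteq> 2 ^ m - 1" by blast
  have "n = 1" if "n \<ge> 1" "kirch_filter {1, x ^ n} = kirch_filter {1, x}" for n
  proof (rule ccontr)
    assume "n \<noteq> 1"
    hence "n \<ge> 2" using that(1) by simp
    then obtain p where "prime p" "[x ^ n = 1] (mod p)" "\<not> [x = 1] (mod p)"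
      using exists_prime_cong_power_one_not_one[OF assms _ not_mersenne] by blast
    thus False
      using kirch_filter_power_eq_imp_cong_one[OF assms that] by blast
  qed
  thus "{n. n \<ge> 1 \<and> kirch_filter {1, x ^ n} = kirch_filter {1, x}} = {1}"
    by auto
qed

end
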